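(* Let $0<\sigma<\infty$ and $\psi\in L^1(\mathbb{R})\cap L^\infty(\mathbb{R})$. Then the functional $\Psi(g)=\int_{-\infty}^{\infty}g(t)\overline{\psi(t)}\,dt$, $g\in B^1_\sigma$, is weak$^*$ continuous on $B^1_\sigma$.
   Context: For $0<\sigma<\infty$, $B^1_\sigma$ is the space of $f\in L^1(\mathbb{R})$ whose Fourier transform is supported in $[-\sigma,\sigma]$, with the $L^1(\mathbb{R})$ norm. $C_0(\mathbb{R})$ is the Banach space of continuous complex functions on $\mathbb{R}$ vanishing at infinity. Let $\mathfrak{I}_\sigma$ be the set of finite complex Borel measures $\mu$ on $\mathbb{R}$ whose Fourier–Stieltjes transform vanishes for $|t|\ge\sigma$, and $C_{0,\sigma}(\mathbb{R})=\{u\in C_0(\mathbb{R}): \int u\,d\mu=0 \text{ for all }\mu\in\mathfrak{I}_\sigma\}$. Then $B^1_\sigma$ is the dual of $C_0(\mathbb{R})/C_{0,\sigma}(\mathbb{R})$ via the pairing $\langle f,[u]\rangle=\int_{\mathbb{R}}f(x)u(x)\,dx$, and the weak$^*$ topology on $B^1_\sigma$ refers to this duality. *)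

theory Defs
  imports "HOL-Analysis.Analysis"
begin

definition fourier_transform :: "(real \<Rightarrow> complex) \<Rightarrow> real \<Rightarrow> complex" where
  "fourier_transform f t = (LINT x|lborel. f x * exp (- (\<i> * complex_of_real (t * x))))"

definition B1 :: "real \<Rightarrow> (real \<Rightarrow> complex) set" where
  "B1 \<sigma> = {f. integrable lborel f \<and>
               closure {t. fourier_transform f t \<noteq> 0} \<subseteq> {-\<sigma>..\<sigma>}}"

definition C0 :: "(real \<Rightarrow> complex) set" where
  "C0 = {u. continuous_on UNIV u \<and> (u \<longlongrightarrow> 0) at_infinity}"

text \<open>The duality pairing between B^1_sigma and C_0(R)/C_{0,sigma}(R):
  the class [u] acts on f by integral of f u.\<close>
definition pairing :: "(real \<Rightarrow> complex) \<Rightarrow> (real \<Rightarrow> complex) \<Rightarrow> complex" where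
  "pairing f u = (LINT x|lborel. f x * u x)"

definition weak_star_B1 :: "real \<Rightarrow> (real \<Rightarrow> complex) topology" where
  "weak_star_B1 \<sigma> = topology_generated_by
     (insert (B1 \<sigma>) {{f \<in> B1 \<sigma>. pairing f u \<in> U} | u U. u \<in> C0 \<and> open U})"

end

theory Submission
  imports Defs "HOL-Probability.Levy"
begin

text \<open>Let \<open>F\<^sub>b(x) = (1 - cos (b x)) / x\<^sup>2\<close> be the Fejer kernel, whose integral is
  \<open>pi \<bar>b\<bar>\<close>, and \<open>K = (F\<^sub>2\<^sub>\<sigma> - F\<^sub>\<sigma>) / (pi \<sigma>)\<close> the de la Vallee Poussin kernel. \<open>K\<close> is
  integrable, even, continuous and vanishes at infinity, and its Fourier transform is \<open>1\<close> on
  \<open>[-\<sigma>, \<sigma>]\<close>. Hence \<open>g * K = g\<close> almost everywhere for every \<open>g \<in> B\<^sup>1\<^sub>\<sigma>\<close>, by uniqueness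
  of the Fourier transform on \<open>L\<^sup>1\<close> (which reduces to Levy's uniqueness theorem for
  characteristic functions). By Fubini and the evenness of \<open>K\<close>,
  \<open>\<integral> g cnj \<psi> = \<integral> (g * K) cnj \<psi> = \<integral> g (cnj \<psi> * K)\<close>, and \<open>cnj \<psi> * K\<close> lies in \<open>C\<^sub>0\<close> because
  \<open>\<psi>\<close> is integrable. So the functional is one of the maps \<open>\<langle>-, [u]\<rangle>\<close> generating the
  weak-star topology.\<close>

section \<open>The Fejer kernel\<close>

text \<open>The sinc form extends \<open>(1 - cos (b x)) / x\<^sup>2\<close> continuously to \<open>x = 0\<close>.\<close>

definition fejer_kernel :: "real \<Rightarrow> real \<Rightarrow> real" where
  "fejer_kernel b x = b\<^sup>2 * (sinc (b * x / 2))\<^sup>2 / 2"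

lemma isCont_fejer_kernel: "isCont (fejer_kernel b) x"
  unfolding fejer_kernel_def by (intro continuous_intros isCont_o2[OF _ isCont_sinc]) auto

lemma borel_measurable_fejer_kernel [measurable]: "fejer_kernel b \<in> borel_measurable borel"
  by (intro borel_measurable_continuous_onI continuous_at_imp_continuous_on ballI
      isCont_fejer_kernel)

lemma fejer_kernel_nonneg: "0 \<le> fejer_kernel b x"
  unfolding fejer_kernel_def by simp

lemma fejer_kernel_minus [simp]: "fejer_kernel b (- x) = fejer_kernel b x"
  unfolding fejer_kernel_def by simp

lemma fejer_kernel_eq: "x \<noteq> 0 \<Longrightarrow> fejer_kernel b x = (1 - cos (b * x)) / x\<^sup>2"
  using cos_double_sin[of "b * x / 2"]
  by (cases "b = 0") (simp_all add: fejer_kernel_def field_simps power2_eq_square)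

lemma fejer_kernel_scale: "fejer_kernel b x = b\<^sup>2 * fejer_kernel 1 (b * x)"
  by (simp add: fejer_kernel_def)

lemma fejer_kernel_tendsto_0: "(fejer_kernel b \<longlongrightarrow> 0) at_infinity"
proof (rule Lim_null_comparison)
  show "\<forall>\<^sub>F x in at_infinity. norm (fejer_kernel b x) \<le> 2 * (inverse (norm x))\<^sup>2"
    unfolding eventually_at_infinity
  proof (intro exI[of _ 1] allI impI)
    fix x :: real
    assume "1 \<le> norm x"
    then have "fejer_kernel b x = (1 - cos (b * x)) / x\<^sup>2"
      by (intro fejer_kernel_eq) auto
    also have "\<dots> \<le> 2 / x\<^sup>2"
      by (rule divide_right_mono) (use cos_ge_minus_one[of "b * x"] in auto)
    finally show "norm (fejer_kernel b x) \<le> 2 * (inverse (norm x))\<^sup>2"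
      using fejer_kernel_nonneg[of b x] by (simp add: power_inverse divide_inverse)
  qed
  show "((\<lambda>x::real. 2 * (inverse (norm x))\<^sup>2) \<longlongrightarrow> 0) at_infinity"
    using tendsto_inverse_0_at_top[OF filterlim_norm_at_top[where 'a=real]]
    by (auto intro: tendsto_eq_intros)
qed

lemma Si_0 [simp]: "Si 0 = 0"
  by (simp add: Si_def interval_lebesgue_integral_def einterval_same set_lebesgue_integral_def
      zero_ereal_def[symmetric])

lemma Si_at_bot: "(Si \<longlongrightarrow> - (pi / 2)) at_bot"
proof -
  have "((\<lambda>x. Si (- x)) \<longlongrightarrow> - (pi / 2)) at_top"
    using tendsto_minus[OF Si_at_top]
    by (rule Lim_transform_eventually)
      (auto simp: eventually_at_top_linorder Si_neg intro: exI[of _ 0])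
  then show ?thesis
    by (simp add: filterlim_at_bot_mirror)
qed

text \<open>\<open>Si y - (1 - cos y) / y\<close> is a primitive of \<open>fejer_kernel 1\<close> away from \<open>0\<close>; it is
  continuous at \<open>0\<close> as well, since the next identity also holds there (both sides are \<open>0\<close>,
  the left one because \<open>x / 0 = 0\<close>).\<close>

lemma one_minus_cos_divide_eq: "(1 - cos y) / y = y * fejer_kernel 1 y"
  by (cases "y = 0") (simp_all add: fejer_kernel_eq power2_eq_square)

lemma has_real_derivative_fejer_primitive:
  assumes "y \<noteq> 0"
  shows "((\<lambda>y. Si y - (1 - cos y) / y) has_real_derivative fejer_kernel 1 y) (at y)"
proof -
  have "((\<lambda>y. Si y - (1 - cos y) / y) has_real_derivative
      sinc y - (sin y * y - (1 - cos y)) / (y * y)) (at y)"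
    using assms DERIV_Si[of y] by (auto intro!: derivative_eq_intros)
  also have "sinc y - (sin y * y - (1 - cos y)) / (y * y) = fejer_kernel 1 y"
    using assms by (simp add: fejer_kernel_eq field_simps power2_eq_square)
  finally show ?thesis .
qed

lemma isCont_fejer_primitive: "isCont (\<lambda>y. Si y - (1 - cos y) / y) x"
  unfolding one_minus_cos_divide_eq by (intro continuous_intros isCont_Si isCont_fejer_kernel)

lemma one_minus_cos_divide_tendsto_0: "((\<lambda>y::real. (1 - cos y) / y) \<longlongrightarrow> 0) at_infinity"
proof (rule Lim_null_comparison)
  have bound: "norm ((1 - cos y) / y) \<le> 2 * inverse (norm y)" for y :: real
  proof -
    have "\<bar>1 - cos y\<bar> \<le> 2"
      using cos_ge_minus_one[of y] cos_le_one[of y] by linarith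
    then show ?thesis
      by (simp add: abs_divide divide_right_mono field_simps)
  qed
  then show "\<forall>\<^sub>F y in at_infinity. norm ((1 - cos y) / y) \<le> 2 * inverse (norm (y::real))"
    by (intro always_eventually allI)
  show "((\<lambda>y::real. 2 * inverse (norm y)) \<longlongrightarrow> 0) at_infinity"
    using tendsto_inverse_0_at_top[OF filterlim_norm_at_top[where 'a=real]]
    by (auto intro: tendsto_eq_intros)
qed

lemma fejer_kernel_1_integral_Ioi:
  "set_integrable lborel (einterval 0 \<infinity>) (fejer_kernel 1)"
  "(LBINT x=0..\<infinity>. fejer_kernel 1 x) = pi / 2"
proof -
  have F': "((\<lambda>y. Si y - (1 - cos y) / y) has_real_derivative fejer_kernel 1 x) (at x)"
    if "0 < ereal x" "ereal x < \<infinity>" for x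
    using that by (intro has_real_derivative_fejer_primitive) (auto simp: zero_ereal_def)
  have F0: "(((\<lambda>y. Si y - (1 - cos y) / y) \<circ> real_of_ereal) \<longlongrightarrow> 0) (at_right 0)"
    unfolding zero_ereal_def ereal_tendsto_simps
    using isCont_fejer_primitive[of 0, unfolded isCont_def] by (auto intro: tendsto_mono at_le)
  have F_inf: "(((\<lambda>y. Si y - (1 - cos y) / y) \<circ> real_of_ereal) \<longlongrightarrow> pi / 2) (at_left \<infinity>)"
    unfolding ereal_tendsto_simps
    using tendsto_diff[OF Si_at_top
        tendsto_mono[OF at_top_le_at_infinity one_minus_cos_divide_tendsto_0]]
    by simp
  show "set_integrable lborel (einterval 0 \<infinity>) (fejer_kernel 1)"
      "(LBINT x=0..\<infinity>. fejer_kernel 1 x) = pi / 2"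
    using interval_integral_FTC_nonneg[OF _ F' _ _ F0 F_inf]
    by (auto simp: isCont_fejer_kernel fejer_kernel_nonneg)
qed

lemma fejer_kernel_1_integral_Iio:
  "set_integrable lborel (einterval (-\<infinity>) 0) (fejer_kernel 1)"
  "(LBINT x=-\<infinity>..0. fejer_kernel 1 x) = pi / 2"
proof -
  have F': "((\<lambda>y. Si y - (1 - cos y) / y) has_real_derivative fejer_kernel 1 x) (at x)"
    if "-\<infinity> < ereal x" "ereal x < 0" for x
    using that by (intro has_real_derivative_fejer_primitive) (auto simp: zero_ereal_def)
  have F_inf: "(((\<lambda>y. Si y - (1 - cos y) / y) \<circ> real_of_ereal) \<longlongrightarrow> - (pi / 2)) (at_right (-\<infinity>))"
    unfolding ereal_tendsto_simps
    using tendsto_diff[OF Si_at_bot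
        tendsto_mono[OF at_bot_le_at_infinity one_minus_cos_divide_tendsto_0]]
    by simp
  have F0: "(((\<lambda>y. Si y - (1 - cos y) / y) \<circ> real_of_ereal) \<longlongrightarrow> 0) (at_left 0)"
    unfolding zero_ereal_def ereal_tendsto_simps
    using isCont_fejer_primitive[of 0, unfolded isCont_def] by (auto intro: tendsto_mono at_le)
  show "set_integrable lborel (einterval (-\<infinity>) 0) (fejer_kernel 1)"
      "(LBINT x=-\<infinity>..0. fejer_kernel 1 x) = pi / 2"
    using interval_integral_FTC_nonneg[OF _ F' _ _ F_inf F0]
    by (auto simp: isCont_fejer_kernel fejer_kernel_nonneg)
qed

lemma has_bochner_integral_fejer_kernel_1: "has_bochner_integral lborel (fejer_kernel 1) pi"
proof -
  have neg: "set_integrable lborel {..<0} (fejer_kernel 1)"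
    and pos: "set_integrable lborel {0<..} (fejer_kernel 1)"
    using fejer_kernel_1_integral_Iio(1) fejer_kernel_1_integral_Ioi(1)
    by (simp_all add: zero_ereal_def)
  have ae: "AE x in lborel. indicator ({..<0} \<union> {0<..}) x *\<^sub>R fejer_kernel 1 x = fejer_kernel 1 x"
    using AE_lborel_singleton[of 0] by eventually_elim (auto simp: indicator_def)
  have "set_integrable lborel ({..<0} \<union> {0<..}) (fejer_kernel 1)"
    by (rule set_integrable_Un[OF neg pos]) auto
  then have int: "integrable lborel (fejer_kernel 1)"
    unfolding set_integrable_def using integrable_cong_AE[OF _ _ ae] by simp
  have "(LINT x|lborel. fejer_kernel 1 x) = (LINT x:{..<0} \<union> {0<..}|lborel. fejer_kernel 1 x)"
    unfolding set_lebesgue_integral_def using integral_cong_AE[OF _ _ ae] by simp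
  also have "\<dots> = (LINT x:{..<0}|lborel. fejer_kernel 1 x)
      + (LINT x:{0<..}|lborel. fejer_kernel 1 x)"
    by (rule set_integral_Un[OF _ neg pos]) auto
  also have "\<dots> = pi"
    using fejer_kernel_1_integral_Iio(2) fejer_kernel_1_integral_Ioi(2)
    by (simp add: zero_ereal_def interval_lebesgue_integral_def)
  finally show ?thesis
    using int by (simp add: has_bochner_integral_iff)
qed

lemma has_bochner_integral_fejer_kernel:
  "has_bochner_integral lborel (fejer_kernel b) (pi * \<bar>b\<bar>)"
proof (cases "b = 0")
  case True
  then have "fejer_kernel b = (\<lambda>_. 0)"
    by (simp add: fejer_kernel_def fun_eq_iff)
  with True show ?thesis
    by (simp add: has_bochner_integral_zero)
next
  case False
  have int: "integrable lborel (fejer_kernel 1)" and "(LINT x|lborel. fejer_kernel 1 x) = pi"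
    using has_bochner_integral_fejer_kernel_1 by (simp_all add: has_bochner_integral_iff)
  then have "(LINT x|lborel. fejer_kernel 1 (0 + b * x)) = pi / \<bar>b\<bar>"
    using lborel_integral_real_affine[OF False, of "fejer_kernel 1" 0] False
    by (simp add: divide_simps mult.commute)
  moreover have "integrable lborel (\<lambda>x. fejer_kernel 1 (0 + b * x))"
    by (rule lborel_integrable_real_affine[OF int False])
  ultimately have "has_bochner_integral lborel (\<lambda>x. b\<^sup>2 * fejer_kernel 1 (0 + b * x))
      (b\<^sup>2 * (pi / \<bar>b\<bar>))"
    by (intro has_bochner_integral_mult_right) (simp add: has_bochner_integral_iff)
  moreover have "b\<^sup>2 * (pi / \<bar>b\<bar>) = pi * \<bar>b\<bar>"
    using False by (cases "b > 0") (simp_all add: power2_eq_square field_simps)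
  ultimately show ?thesis
    by (simp add: fejer_kernel_scale[of b, abs_def])
qed

section \<open>Uniqueness of the Fourier transform\<close>

lemma fourier_transform_iexp: "fourier_transform h t = (CLBINT x. h x * iexp (- t * x))"
  unfolding fourier_transform_def by simp

lemma integrable_mult_iexp:
  fixes h :: "real \<Rightarrow> complex"
  assumes "integrable lborel h"
  shows "integrable lborel (\<lambda>x. h x * iexp (t * x))"
proof (rule Bochner_Integration.integrable_bound[OF assms])
  have [measurable]: "h \<in> borel_measurable borel"
    using assms by simp
  show "(\<lambda>x. h x * iexp (t * x)) \<in> borel_measurable lborel"
    by measurable
qed (simp add: norm_mult)

lemma integrable_scaleR_iexp:
  fixes F :: "real \<Rightarrow> real"
  assumes "integrable lborel F"
  shows "integrable lborel (\<lambda>x. F x *\<^sub>R iexp (t * x))"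
  using integrable_mult_iexp[OF integrable_of_real[OF assms]] by (simp add: scaleR_conv_of_real)

lemma fourier_transform_diff:
  assumes "integrable lborel f" "integrable lborel g"
  shows "fourier_transform (\<lambda>x. f x - g x) t = fourier_transform f t - fourier_transform g t"
  unfolding fourier_transform_iexp left_diff_distrib
  by (intro Bochner_Integration.integral_diff integrable_mult_iexp assms)

lemma fourier_transform_of_real_even:
  fixes k :: "real \<Rightarrow> real"
  assumes k: "integrable lborel k" and even: "\<And>x. k (- x) = k x"
  shows "fourier_transform (\<lambda>x. complex_of_real (k x)) t
    = complex_of_real (LINT x|lborel. k x * cos (t * x))"
proof -
  have [measurable]: "k \<in> borel_measurable borel"
    using k by simp
  have int_cos: "integrable lborel (\<lambda>x. k x * cos (t * x))"
    by (rule Bochner_Integration.integrable_bound[OF k]) (auto simp: abs_mult intro!: mult_left_le)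
  have int_sin: "integrable lborel (\<lambda>x. k x * sin (t * x))"
    by (rule Bochner_Integration.integrable_bound[OF k]) (auto simp: abs_mult intro!: mult_left_le)
  have "(LINT x|lborel. k x * sin (t * x))
      = (LINT x|lborel. k (0 + -1 * x) * sin (t * (0 + -1 * x)))"
    using lborel_integral_real_affine[of "-1" "\<lambda>x. k x * sin (t * x)" 0] by simp
  also have "\<dots> = - (LINT x|lborel. k x * sin (t * x))"
    by (simp add: even)
  finally have sin_zero: "(LINT x|lborel. k x * sin (t * x)) = 0"
    by simp
  have "complex_of_real (k x) * exp (- (\<i> * complex_of_real (t * x)))
      = complex_of_real (k x * cos (t * x)) - \<i> * complex_of_real (k x * sin (t * x))" for x
  proof -
    have "exp (- (\<i> * complex_of_real (t * x))) = cis (- (t * x))"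
      by (simp add: cis_conv_exp)
    then show ?thesis
      by (simp add: complex_eq_iff)
  qed
  then have "fourier_transform (\<lambda>x. complex_of_real (k x)) t
      = (LINT x|lborel. complex_of_real (k x * cos (t * x))
          - \<i> * complex_of_real (k x * sin (t * x)))"
    unfolding fourier_transform_def by presburger
  also have "\<dots> = (LINT x|lborel. complex_of_real (k x * cos (t * x)))
      - (LINT x|lborel. \<i> * complex_of_real (k x * sin (t * x)))"
    by (intro Bochner_Integration.integral_diff integrable_mult_right integrable_of_real
        int_cos int_sin)
  also have "\<dots> = complex_of_real (LINT x|lborel. k x * cos (t * x))"
    using sin_zero by (simp only: integral_mult_right_zero integral_complex_of_real) simp
  finally show ?thesis .
qed

lemma density_lborel_char_eq_imp_AE_eq:
  fixes G H :: "real \<Rightarrow> real"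
  assumes G: "integrable lborel G" "\<And>x. 0 \<le> G x" "(LINT x|lborel. G x) = 1"
    and H: "integrable lborel H" "\<And>x. 0 \<le> H x" "(LINT x|lborel. H x) = 1"
    and char_eq: "\<And>t. (CLBINT x. G x *\<^sub>R iexp (t * x)) = (CLBINT x. H x *\<^sub>R iexp (t * x))"
  shows "AE x in lborel. G x = H x"
proof -
  have real_distribution: "real_distribution (density lborel (\<lambda>x. ennreal (F x)))"
    and char: "char (density lborel (\<lambda>x. ennreal (F x))) = (\<lambda>t. CLBINT x. F x *\<^sub>R iexp (t * x))"
    if F: "integrable lborel F" "\<And>x. 0 \<le> F x" "(LINT x|lborel. F x) = 1" for F
  proof -
    have [measurable]: "F \<in> borel_measurable borel"
      using F by simp
    have "emeasure (density lborel (\<lambda>x. ennreal (F x))) UNIV = ennreal (LINT x|lborel. F x)"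
      using F by (simp add: emeasure_density nn_integral_eq_integral)
    then show "real_distribution (density lborel (\<lambda>x. ennreal (F x)))"
      using F by (intro real_distribution.intro real_distribution_axioms.intro prob_spaceI) auto
    show "char (density lborel (\<lambda>x. ennreal (F x))) = (\<lambda>t. CLBINT x. F x *\<^sub>R iexp (t * x))"
      using F unfolding char_def by (intro ext integral_density) auto
  qed
  have "density lborel (\<lambda>x. ennreal (G x)) = density lborel (\<lambda>x. ennreal (H x))"
    by (intro Levy_uniqueness real_distribution[OF G] real_distribution[OF H])
      (simp only: char[OF G] char[OF H] char_eq)
  then have "AE x in lborel. ennreal (G x) = ennreal (H x)"
    using G H
    by (subst (asm) sigma_finite_measure.density_unique_iff[OF lborel.sigma_finite_measure_axioms])
      auto
  then show ?thesis
    by eventually_elim (simp add: G(2) H(2))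
qed

text \<open>Adding the same bump to \<open>p\<close> and \<open>q\<close> and normalising turns them into probability
  densities (also when \<open>p = q = 0\<close>), with equal characteristic functions.\<close>

lemma nonneg_AE_eq_if_iexp_integrals_eq:
  fixes p q :: "real \<Rightarrow> real"
  assumes p: "integrable lborel p" "\<And>x. 0 \<le> p x" and q: "integrable lborel q" "\<And>x. 0 \<le> q x"
    and eq: "\<And>t. (CLBINT x. p x *\<^sub>R iexp (t * x)) = (CLBINT x. q x *\<^sub>R iexp (t * x))"
  shows "AE x in lborel. p x = q x"
proof -
  define bump :: "real \<Rightarrow> real" where "bump = indicator {0..1}"
  define c where "c = (LINT x|lborel. p x)"
  have bump: "integrable lborel bump" "(LINT x|lborel. bump x) = 1" "\<And>x. 0 \<le> bump x"
    unfolding bump_def by auto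
  have "0 \<le> c"
    unfolding c_def using p by (intro integral_nonneg_AE AE_I2)
  have c_q: "(LINT x|lborel. q x) = c"
    using eq[of 0] unfolding c_def by (simp add: scaleR_conv_of_real)
  have density: "integrable lborel (\<lambda>x. (1 / (c + 1)) * (F x + bump x))"
      "\<And>x. 0 \<le> (1 / (c + 1)) * (F x + bump x)" "(LINT x|lborel. (1 / (c + 1)) * (F x + bump x)) = 1"
    if "integrable lborel F" "\<And>x. 0 \<le> F x" "(LINT x|lborel. F x) = c" for F
    using that bump \<open>0 \<le> c\<close> by auto
  have char: "(CLBINT x. ((1 / (c + 1)) * (F x + bump x)) *\<^sub>R iexp (t * x))
      = (1 / (c + 1)) *\<^sub>R ((CLBINT x. F x *\<^sub>R iexp (t * x)) + (CLBINT x. bump x *\<^sub>R iexp (t * x)))"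
    if "integrable lborel F" for F t
    unfolding scaleR_scaleR[symmetric] scaleR_add_left integral_scaleR_right
    by (intro arg_cong[where f="scaleR _"] Bochner_Integration.integral_add
        integrable_scaleR_iexp that bump)
  have "AE x in lborel. (1 / (c + 1)) * (p x + bump x) = (1 / (c + 1)) * (q x + bump x)"
    by (rule density_lborel_char_eq_imp_AE_eq[OF density[OF p c_def[symmetric]] density[OF q c_q]])
      (simp only: char[OF p(1)] char[OF q(1)] eq)
  then show ?thesis
    by eventually_elim (use \<open>0 \<le> c\<close> in simp)
qed

lemma AE_eq_0_if_iexp_integrals_eq_0:
  fixes f :: "real \<Rightarrow> real"
  assumes f: "integrable lborel f" and zero: "\<And>t. (CLBINT x. f x *\<^sub>R iexp (t * x)) = 0"
  shows "AE x in lborel. f x = 0"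
proof -
  have int_parts: "integrable lborel (\<lambda>x. max (f x) 0)" "integrable lborel (\<lambda>x. max (- f x) 0)"
    using f by auto
  have "(CLBINT x. max (f x) 0 *\<^sub>R iexp (t * x)) - (CLBINT x. max (- f x) 0 *\<^sub>R iexp (t * x))
      = (CLBINT x. f x *\<^sub>R iexp (t * x))" for t
  proof -
    have "(CLBINT x. max (f x) 0 *\<^sub>R iexp (t * x)) - (CLBINT x. max (- f x) 0 *\<^sub>R iexp (t * x))
        = (CLBINT x. max (f x) 0 *\<^sub>R iexp (t * x) - max (- f x) 0 *\<^sub>R iexp (t * x))"
      by (intro Bochner_Integration.integral_diff[symmetric] integrable_scaleR_iexp int_parts)
    also have "\<dots> = (CLBINT x. f x *\<^sub>R iexp (t * x))"
      by (rule Bochner_Integration.integral_cong)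
        (simp_all add: scaleR_diff_left[symmetric] max_def)
    finally show ?thesis .
  qed
  then have "AE x in lborel. max (f x) 0 = max (- f x) 0"
    using zero int_parts by (intro nonneg_AE_eq_if_iexp_integrals_eq) auto
  then show ?thesis
    by eventually_elim (simp add: max_def split: if_splits)
qed

lemma fourier_transform_eq_0_imp_AE_eq_0:
  fixes h :: "real \<Rightarrow> complex"
  assumes h: "integrable lborel h" and zero: "\<And>t. fourier_transform h t = 0"
  shows "AE x in lborel. h x = 0"
proof -
  have h_iexp: "(CLBINT x. h x * iexp (t * x)) = 0" for t
    using zero[of "- t"] by (simp add: fourier_transform_iexp)
  have cnj_h_iexp: "(CLBINT x. cnj (h x) * iexp (t * x)) = 0" for t
  proof -
    have "(CLBINT x. cnj (h x) * iexp (t * x)) = (CLBINT x. cnj (h x * iexp (- t * x)))"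
      by (rule Bochner_Integration.integral_cong) (simp_all add: exp_cnj)
    also have "\<dots> = cnj (fourier_transform h t)"
      unfolding fourier_transform_iexp by (rule Bochner_Integration.integral_cnj)
    finally show ?thesis
      by (simp only: zero complex_cnj_zero)
  qed
  have int_h: "integrable lborel (\<lambda>x. h x * iexp (t * x))" for t
    by (intro integrable_mult_iexp h)
  have int_cnj_h: "integrable lborel (\<lambda>x. cnj (h x) * iexp (t * x))" for t
    by (intro integrable_mult_iexp integrable_cnj h)
  have "AE x in lborel. Re (h x) = 0"
  proof (rule AE_eq_0_if_iexp_integrals_eq_0)
    fix t
    have "Re (h x) *\<^sub>R iexp (t * x) = (h x * iexp (t * x) + cnj (h x) * iexp (t * x)) / 2" for x
      unfolding distrib_right[symmetric] complex_add_cnj by (simp add: scaleR_conv_of_real)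
    then have "(CLBINT x. Re (h x) *\<^sub>R iexp (t * x))
        = ((CLBINT x. h x * iexp (t * x)) + (CLBINT x. cnj (h x) * iexp (t * x))) / 2"
      by (simp only: integral_divide_zero Bochner_Integration.integral_add[OF int_h int_cnj_h])
    then show "(CLBINT x. Re (h x) *\<^sub>R iexp (t * x)) = 0"
      by (simp only: h_iexp cnj_h_iexp) simp
  qed (use h in auto)
  moreover have "AE x in lborel. Im (h x) = 0"
  proof (rule AE_eq_0_if_iexp_integrals_eq_0)
    fix t
    have "Im (h x) *\<^sub>R iexp (t * x)
        = (h x * iexp (t * x) - cnj (h x) * iexp (t * x)) / (2 * \<i>)" for x
      unfolding left_diff_distrib[symmetric] complex_diff_cnj
      by (simp add: scaleR_conv_of_real field_simps)
    then have "(CLBINT x. Im (h x) *\<^sub>R iexp (t * x))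
        = ((CLBINT x. h x * iexp (t * x)) - (CLBINT x. cnj (h x) * iexp (t * x))) / (2 * \<i>)"
      by (simp only: integral_divide_zero Bochner_Integration.integral_diff[OF int_h int_cnj_h])
    then show "(CLBINT x. Im (h x) *\<^sub>R iexp (t * x)) = 0"
      by (simp only: h_iexp cnj_h_iexp) simp
  qed (use h in auto)
  ultimately show ?thesis
    by eventually_elim (simp add: complex_eq_iff)
qed

section \<open>The de la Vallee Poussin kernel\<close>

definition vallee_poussin_kernel :: "real \<Rightarrow> real \<Rightarrow> real" where
  "vallee_poussin_kernel s x = (fejer_kernel (2 * s) x - fejer_kernel s x) / (pi * s)"

lemma isCont_vallee_poussin_kernel: "isCont (vallee_poussin_kernel s) x"
  unfolding vallee_poussin_kernel_def divide_inverse
  by (intro continuous_intros isCont_fejer_kernel)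

lemma borel_measurable_vallee_poussin_kernel [measurable]:
  "vallee_poussin_kernel s \<in> borel_measurable borel"
  unfolding vallee_poussin_kernel_def by measurable

lemma vallee_poussin_kernel_minus [simp]:
  "vallee_poussin_kernel s (- x) = vallee_poussin_kernel s x"
  by (simp add: vallee_poussin_kernel_def)

lemma integrable_vallee_poussin_kernel: "integrable lborel (vallee_poussin_kernel s)"
  using has_bochner_integral_fejer_kernel unfolding vallee_poussin_kernel_def
  by (intro integrable_divide integrable_diff) (auto simp: has_bochner_integral_iff)

lemma vallee_poussin_kernel_tendsto_0: "(vallee_poussin_kernel s \<longlongrightarrow> 0) at_infinity"
proof -
  have "((\<lambda>x. fejer_kernel (2 * s) x - fejer_kernel s x) \<longlongrightarrow> 0) at_infinity"
    using tendsto_diff[OF fejer_kernel_tendsto_0 fejer_kernel_tendsto_0] by simp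
  then show ?thesis
    unfolding vallee_poussin_kernel_def by (rule tendsto_divide_zero)
qed

lemma vallee_poussin_kernel_in_C0: "(\<lambda>x. complex_of_real (vallee_poussin_kernel s x)) \<in> C0"
proof -
  have "isCont (\<lambda>x. complex_of_real (vallee_poussin_kernel s x)) x" for x
    by (intro continuous_of_real isCont_vallee_poussin_kernel)
  moreover have "((\<lambda>x. complex_of_real (vallee_poussin_kernel s x)) \<longlongrightarrow> 0) at_infinity"
    using tendsto_of_real[OF vallee_poussin_kernel_tendsto_0] by simp
  ultimately show ?thesis
    unfolding C0_def by (auto intro: continuous_at_imp_continuous_on isCont_vallee_poussin_kernel)
qed

text \<open>By the product-to-sum formula for \<open>cos (a x) cos (t x)\<close>, the integrand is a
  combination of four Fejer kernels, whose integrals \<open>pi \<bar>b\<bar>\<close> add up to \<open>2 pi s\<close> when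
  \<open>\<bar>t\<bar> \<le> s\<close>.\<close>

lemma integral_vallee_poussin_kernel_cos:
  assumes "0 < s" "\<bar>t\<bar> \<le> s"
  shows "(LINT x|lborel. vallee_poussin_kernel s x * cos (t * x)) = 1"
proof -
  let ?F = "\<lambda>x. (fejer_kernel (2 * s + t) x + fejer_kernel (2 * s - t) x
    - fejer_kernel (s + t) x - fejer_kernel (s - t) x) / (2 * pi * s)"
  have "AE x in lborel. vallee_poussin_kernel s x * cos (t * x) = ?F x"
    using AE_lborel_singleton[of 0]
  proof eventually_elim
    case (elim x)
    have prod_to_sum: "cos ((a + t) * x) + cos ((a - t) * x) = 2 * cos (a * x) * cos (t * x)" for a
      by (simp add: distrib_right left_diff_distrib cos_add cos_diff)
    have numerators: "(1 - cos ((2 * s + t) * x)) + (1 - cos ((2 * s - t) * x))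
        - (1 - cos ((s + t) * x)) - (1 - cos ((s - t) * x))
        = 2 * cos (s * x) * cos (t * x) - 2 * cos (2 * s * x) * cos (t * x)"
      using prod_to_sum[of s] prod_to_sum[of "2 * s"] by linarith
    have "?F x = (2 * cos (s * x) * cos (t * x) - 2 * cos (2 * s * x) * cos (t * x))
        / x\<^sup>2 / (2 * pi * s)"
      by (simp only: fejer_kernel_eq[OF elim] add_divide_distrib[symmetric]
          diff_divide_distrib[symmetric] numerators)
    also have "\<dots> = vallee_poussin_kernel s x * cos (t * x)"
      using elim assms by (simp add: vallee_poussin_kernel_def fejer_kernel_eq field_simps)
    finally show ?case ..
  qed
  then have "(LINT x|lborel. vallee_poussin_kernel s x * cos (t * x)) = (LINT x|lborel. ?F x)"
    by (rule integral_cong_AE[rotated 2]) auto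
  also have "\<dots> = (pi * \<bar>2 * s + t\<bar> + pi * \<bar>2 * s - t\<bar> - pi * \<bar>s + t\<bar> - pi * \<bar>s - t\<bar>) / (2 * pi * s)"
    using has_bochner_integral_fejer_kernel
    by (simp add: has_bochner_integral_iff integral_diff integral_add)
  also have "\<dots> = 1"
    using assms by (simp add: abs_if field_simps split: if_splits)
  finally show ?thesis .
qed

lemma fourier_transform_vallee_poussin_kernel:
  assumes "0 < s" "\<bar>t\<bar> \<le> s"
  shows "fourier_transform (\<lambda>x. complex_of_real (vallee_poussin_kernel s x)) t = 1"
  by (simp add: fourier_transform_of_real_even integrable_vallee_poussin_kernel
      integral_vallee_poussin_kernel_cos[OF assms])

section \<open>Convolution\<close>

definition conv :: "(real \<Rightarrow> complex) \<Rightarrow> (real \<Rightarrow> complex) \<Rightarrow> real \<Rightarrow> complex" where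
  "conv f k x = (LINT y|lborel. f y * k (x - y))"

lemma nn_integral_lborel_shift:
  fixes f :: "real \<Rightarrow> ennreal"
  assumes "f \<in> borel_measurable borel"
  shows "(\<integral>\<^sup>+x. f (x - y) \<partial>lborel) = (\<integral>\<^sup>+x. f x \<partial>lborel)"
  using nn_integral_real_affine[OF assms, of 1 "- y"] by simp

lemma lborel_integral_shift:
  fixes k :: "real \<Rightarrow> 'a::{banach, second_countable_topology}"
  shows "(LINT x|lborel. k (x - y)) = (LINT x|lborel. k x)"
  using lborel_integral_real_affine[of 1 k "- y"] by simp

lemma integrable_conv_product:
  fixes f k \<phi> :: "real \<Rightarrow> complex"
  assumes f: "integrable lborel f" and k: "integrable lborel k"
    and \<phi>: "\<phi> \<in> borel_measurable borel" "AE x in lborel. norm (\<phi> x) \<le> C"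
  shows "integrable (lborel \<Otimes>\<^sub>M lborel) (\<lambda>(y, x). f y * k (x - y) * \<phi> x)"
proof -
  have [measurable]: "f \<in> borel_measurable borel" "k \<in> borel_measurable borel"
      "\<phi> \<in> borel_measurable borel"
    using f k \<phi> by simp_all
  have "(\<integral>\<^sup>+z. ennreal (norm (case z of (y, x) \<Rightarrow> f y * k (x - y) * \<phi> x)) \<partial>(lborel \<Otimes>\<^sub>M lborel))
      = (\<integral>\<^sup>+y. \<integral>\<^sup>+x. ennreal (norm (f y)) * ennreal (norm (k (x - y)))
          * ennreal (norm (\<phi> x)) \<partial>lborel \<partial>lborel)"
    by (subst lborel.nn_integral_fst[symmetric]) (auto simp: norm_mult ennreal_mult)
  also have "\<dots> \<le> (\<integral>\<^sup>+y. \<integral>\<^sup>+x.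
      ennreal (norm (f y)) * ennreal (norm (k (x - y))) * ennreal C \<partial>lborel \<partial>lborel)"
    using \<phi>(2) by (intro nn_integral_mono nn_integral_mono_AE)
      (auto elim!: eventually_mono intro!: mult_left_mono ennreal_leI)
  also have "\<dots> = (\<integral>\<^sup>+y.
      ennreal (norm (f y)) * (\<integral>\<^sup>+x. ennreal (norm (k x)) \<partial>lborel) * ennreal C \<partial>lborel)"
    using nn_integral_lborel_shift[of "\<lambda>x. ennreal (norm (k x))"]
    by (simp add: nn_integral_cmult nn_integral_multc)
  also have "\<dots> = (\<integral>\<^sup>+y. ennreal (norm (f y)) \<partial>lborel)
      * (\<integral>\<^sup>+x. ennreal (norm (k x)) \<partial>lborel) * ennreal C"
    by (simp add: nn_integral_multc)
  also have "\<dots> < \<infinity>"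
    using f k by (simp add: integrable_iff_bounded ennreal_mult_less_top)
  finally show ?thesis
    by (simp add: integrable_iff_bounded)
qed

lemma integral_conv_mult:
  fixes f k \<phi> :: "real \<Rightarrow> complex"
  assumes "integrable lborel f" "integrable lborel k"
    and "\<phi> \<in> borel_measurable borel" "AE x in lborel. norm (\<phi> x) \<le> C"
  shows "(LINT x|lborel. conv f k x * \<phi> x)
    = (LINT y|lborel. f y * (LINT x|lborel. k (x - y) * \<phi> x))"
proof -
  have "(LINT x|lborel. conv f k x * \<phi> x) = (LINT x|lborel. LINT y|lborel. f y * k (x - y) * \<phi> x)"
    by (simp add: conv_def)
  also have "\<dots> = (LINT y|lborel. LINT x|lborel. f y * k (x - y) * \<phi> x)"
    using lborel_pair.Fubini_integral[OF integrable_conv_product[OF assms]] by simp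
  also have "\<dots> = (LINT y|lborel. f y * (LINT x|lborel. k (x - y) * \<phi> x))"
    by (simp add: mult.assoc)
  finally show ?thesis .
qed

lemma integrable_conv:
  assumes "integrable lborel f" "integrable lborel k"
  shows "integrable lborel (conv f k)"
  using lborel_pair.integrable_snd[OF integrable_conv_product[OF assms, of "\<lambda>_. 1" 1]]
  by (simp add: conv_def[abs_def])

lemma fourier_transform_conv:
  assumes "integrable lborel f" "integrable lborel k"
  shows "fourier_transform (conv f k) t = fourier_transform f t * fourier_transform k t"
proof -
  have "fourier_transform (conv f k) t
      = (LINT y|lborel. f y * (LINT x|lborel. k (x - y) * iexp (- t * x)))"
    unfolding fourier_transform_iexp by (rule integral_conv_mult[OF assms, where C=1]) auto
  also have "\<dots> = (LINT y|lborel. f y * iexp (- t * y) * fourier_transform k t)"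
  proof (rule Bochner_Integration.integral_cong[OF refl])
    fix y
    have "(LINT x|lborel. k (x - y) * iexp (- t * x)) = (LINT x|lborel. k x * iexp (- t * (x + y)))"
      using lborel_integral_shift[of "\<lambda>x. k x * iexp (- t * (x + y))" y] by simp
    also have "\<dots> = (LINT x|lborel. k x * iexp (- t * x) * iexp (- t * y))"
    proof (rule Bochner_Integration.integral_cong[OF refl])
      fix x
      have "- t * (x + y) = - t * x + - t * y"
        by algebra
      then show "k x * iexp (- t * (x + y)) = k x * iexp (- t * x) * iexp (- t * y)"
        by (simp only: of_real_add distrib_left exp_add mult.assoc)
    qed
    finally have "(LINT x|lborel. k (x - y) * iexp (- t * x))
        = (LINT x|lborel. k x * iexp (- t * x)) * iexp (- t * y)"
      by simp
    then show "f y * (LINT x|lborel. k (x - y) * iexp (- t * x))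
        = f y * iexp (- t * y) * fourier_transform k t"
      by (simp add: fourier_transform_iexp)
  qed
  also have "\<dots> = fourier_transform f t * fourier_transform k t"
    by (simp add: fourier_transform_iexp)
  finally show ?thesis .
qed

lemma C0_bounded:
  assumes "k \<in> C0"
  obtains B where "\<And>x. norm (k x) \<le> B"
proof -
  have cont: "continuous_on UNIV k" and lim: "(k \<longlongrightarrow> 0) at_infinity"
    using assms by (auto simp: C0_def)
  obtain R where R: "\<And>x. R \<le> norm x \<Longrightarrow> norm (k x) < 1"
    using lim[unfolded tendsto_iff, rule_format, of 1] by (auto simp: eventually_at_infinity)
  have "bounded (k ` cball 0 R)"
    by (intro compact_imp_bounded compact_continuous_image continuous_on_subset[OF cont]) auto
  then obtain B where B: "\<forall>x\<in>cball 0 R. norm (k x) \<le> B"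
    by (auto simp: bounded_iff)
  have "norm (k x) \<le> max 1 B" for x
    using R[of x] B[rule_format, of x] by (cases "R \<le> norm x") (auto simp: less_imp_le)
  then show ?thesis
    by (rule that)
qed

lemma isCont_conv:
  assumes f: "integrable lborel f" and k: "k \<in> C0"
  shows "isCont (conv f k) y"
proof -
  obtain B where B: "\<And>x. norm (k x) \<le> B"
    using C0_bounded[OF k] by blast
  have kc: "isCont k x" for x
    using k by (simp add: C0_def continuous_on_eq_continuous_at)
  have [measurable]: "f \<in> borel_measurable borel" "k \<in> borel_measurable borel"
    using f kc by (auto intro: borel_measurable_continuous_onI continuous_at_imp_continuous_on)
  show ?thesis
    unfolding isCont_def tendsto_at_iff_sequentially comp_def conv_def
  proof (intro allI impI)
    fix X :: "nat \<Rightarrow> real"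
    assume "X \<longlonglongrightarrow> y"
    then have "(\<lambda>n. k (X n - x)) \<longlonglongrightarrow> k (y - x)" for x
      by (intro isCont_tendsto_compose[OF kc] tendsto_intros)
    then show "(\<lambda>n. LINT x|lborel. f x * k (X n - x)) \<longlonglongrightarrow> (LINT x|lborel. f x * k (y - x))"
      using f B by (intro integral_dominated_convergence[where w="\<lambda>x. norm (f x) * B"])
        (auto simp: norm_mult intro!: AE_I2 tendsto_mult_left mult_left_mono)
  qed
qed

lemma conv_tendsto_0:
  assumes f: "integrable lborel f" and k: "k \<in> C0"
  shows "(conv f k \<longlongrightarrow> 0) at_infinity"
proof -
  obtain B where B: "\<And>x. norm (k x) \<le> B"
    using C0_bounded[OF k] by blast
  have k0: "(k \<longlongrightarrow> 0) at_infinity"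
    using k by (simp add: C0_def)
  have [measurable]: "f \<in> borel_measurable borel" "k \<in> borel_measurable borel"
    using f k by (auto simp: C0_def intro: borel_measurable_continuous_onI)
  have along: "((\<lambda>t. conv f k (Y t)) \<longlongrightarrow> 0) at_top"
    if Y: "filterlim Y at_infinity at_top" for Y :: "real \<Rightarrow> real"
  proof -
    have lim: "((\<lambda>t. k (Y t - x)) \<longlongrightarrow> 0) at_top" for x
      using filterlim_compose[OF k0
          tendsto_add_filterlim_at_infinity'[OF Y tendsto_const[of "- x"]]]
      by simp
    show ?thesis
      unfolding conv_def
      by (rule integral_dominated_convergence_at_top
          [where w="\<lambda>x. norm (f x) * B" and f="\<lambda>_. 0", simplified])
        (use f B lim in
          \<open>auto simp: norm_mult intro!: AE_I2 always_eventually tendsto_mult_right_zero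
            mult_left_mono\<close>)
  qed
  have "(conv f k \<longlongrightarrow> 0) at_top"
    using along[OF filterlim_mono[OF filterlim_ident at_top_le_at_infinity order_refl]] by simp
  moreover have "(conv f k \<longlongrightarrow> 0) at_bot"
    unfolding filterlim_at_bot_mirror
    by (rule along[OF filterlim_mono
        [OF filterlim_uminus_at_bot_at_top at_bot_le_at_infinity order_refl]])
  ultimately show ?thesis
    unfolding at_infinity_eq_at_top_bot by (rule filterlim_sup)
qed

lemma conv_in_C0:
  assumes "integrable lborel f" "k \<in> C0"
  shows "conv f k \<in> C0"
  using isCont_conv[OF assms] conv_tendsto_0[OF assms]
  by (simp add: C0_def continuous_at_imp_continuous_on)

section \<open>Weak-star continuity\<close>

lemma AE_conv_vallee_poussin_kernel_eq:
  assumes "0 < \<sigma>" and g: "g \<in> B1 \<sigma>"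
  shows "AE x in lborel. conv g (\<lambda>x. complex_of_real (vallee_poussin_kernel \<sigma> x)) x = g x"
proof -
  let ?K = "\<lambda>x. complex_of_real (vallee_poussin_kernel \<sigma> x)"
  have int_g: "integrable lborel g" and supp: "closure {t. fourier_transform g t \<noteq> 0} \<subseteq> {-\<sigma>..\<sigma>}"
    using g by (auto simp: B1_def)
  have int_K: "integrable lborel ?K"
    by (intro integrable_of_real integrable_vallee_poussin_kernel)
  have "fourier_transform g t * fourier_transform ?K t = fourier_transform g t" for t
  proof (cases "\<bar>t\<bar> \<le> \<sigma>")
    case True
    then show ?thesis
      by (simp add: fourier_transform_vallee_poussin_kernel[OF \<open>0 < \<sigma>\<close>])
  next
    case False
    then have "t \<notin> {-\<sigma>..\<sigma>}"
      by auto
    then have "t \<notin> closure {t. fourier_transform g t \<noteq> 0}"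
      using supp by blast
    then have "fourier_transform g t = 0"
      using closure_subset[of "{t. fourier_transform g t \<noteq> 0}"] by blast
    then show ?thesis
      by simp
  qed
  then have "fourier_transform (\<lambda>x. conv g ?K x - g x) t = 0" for t
    by (simp only: fourier_transform_diff[OF integrable_conv[OF int_g int_K] int_g]
        fourier_transform_conv[OF int_g int_K] diff_self)
  then have "AE x in lborel. conv g ?K x - g x = 0"
    by (intro fourier_transform_eq_0_imp_AE_eq_0 Bochner_Integration.integrable_diff
        integrable_conv int_g int_K)
  then show ?thesis
    by eventually_elim simp
qed

lemma integral_mult_eq_pairing_conv_vallee_poussin_kernel:
  fixes \<phi> :: "real \<Rightarrow> complex"
  assumes "0 < \<sigma>" and g: "g \<in> B1 \<sigma>"
    and \<phi>: "integrable lborel \<phi>" "AE x in lborel. norm (\<phi> x) \<le> C"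
  shows "(LINT t|lborel. g t * \<phi> t)
    = pairing g (conv \<phi> (\<lambda>x. complex_of_real (vallee_poussin_kernel \<sigma> x)))"
proof -
  define K where "K = (\<lambda>x. complex_of_real (vallee_poussin_kernel \<sigma> x))"
  have int_g: "integrable lborel g"
    using g by (simp add: B1_def)
  have int_K: "integrable lborel K"
    unfolding K_def by (intro integrable_of_real integrable_vallee_poussin_kernel)
  have meas: "g \<in> borel_measurable lborel" "conv g K \<in> borel_measurable lborel"
      "\<phi> \<in> borel_measurable lborel"
    by (intro borel_measurable_integrable int_g integrable_conv int_K \<phi>(1))+
  have "AE t in lborel. g t * \<phi> t = conv g K t * \<phi> t"
    using AE_conv_vallee_poussin_kernel_eq[OF assms(1) g] by eventually_elim (simp add: K_def)
  then have "(LINT t|lborel. g t * \<phi> t) = (LINT t|lborel. conv g K t * \<phi> t)"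
    by (rule integral_cong_AE[rotated 2]) (intro borel_measurable_times meas)+
  also have "\<dots> = (LINT y|lborel. g y * (LINT x|lborel. K (x - y) * \<phi> x))"
    using meas(3) by (intro integral_conv_mult[OF int_g int_K _ \<phi>(2)]) simp
  also have "\<dots> = pairing g (conv \<phi> K)"
  proof -
    have "K (x - y) = K (y - x)" for x y
      using vallee_poussin_kernel_minus[of \<sigma> "y - x"] by (simp add: K_def)
    then show ?thesis
      by (simp add: pairing_def conv_def mult.commute)
  qed
  finally show ?thesis
    unfolding K_def .
qed

lemma topspace_weak_star_B1 [simp]: "topspace (weak_star_B1 \<sigma>) = B1 \<sigma>"
  by (auto simp: weak_star_B1_def)

lemma continuous_map_weak_star_B1_pairing:
  assumes "u \<in> C0"
  shows "continuous_map (weak_star_B1 \<sigma>) euclidean (\<lambda>f. pairing f u)"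
  unfolding continuous_map
proof (intro conjI allI impI)
  fix U :: "complex set"
  assume "openin euclidean U"
  then have "openin (weak_star_B1 \<sigma>) {f \<in> B1 \<sigma>. pairing f u \<in> U}"
    unfolding weak_star_B1_def openin_topology_generated_by_iff
    by (intro generate_topology_on.Basis) (use assms in auto)
  then show "openin (weak_star_B1 \<sigma>) {f \<in> topspace (weak_star_B1 \<sigma>). pairing f u \<in> U}"
    by simp
qed simp

theorem lemma4p2:
  fixes \<sigma> :: real and \<psi> :: "real \<Rightarrow> complex"
  assumes "0 < \<sigma>"
    and "integrable lborel \<psi>"
    and "\<exists>C. AE x in lborel. norm (\<psi> x) \<le> C"
  shows "continuous_map (weak_star_B1 \<sigma>) euclidean
           (\<lambda>g. LINT t|lborel. g t * cnj (\<psi> t))"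
proof -
  obtain C where C: "AE x in lborel. norm (cnj (\<psi> x)) \<le> C"
    using assms(3) by auto
  have int_\<psi>: "integrable lborel (\<lambda>x. cnj (\<psi> x))"
    using assms(2) by (rule integrable_cnj)
  let ?u = "conv (\<lambda>x. cnj (\<psi> x)) (\<lambda>x. complex_of_real (vallee_poussin_kernel \<sigma> x))"
  have "continuous_map (weak_star_B1 \<sigma>) euclidean (\<lambda>g. pairing g ?u)"
    by (intro continuous_map_weak_star_B1_pairing conv_in_C0 int_\<psi> vallee_poussin_kernel_in_C0)
  then show ?thesis
    by (rule continuous_map_eq)
      (simp add: integral_mult_eq_pairing_conv_vallee_poussin_kernel[OF assms(1) _ int_\<psi> C])
qed

end
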